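(* Let $q>p-1$, and let $\Sigma_q\subseteq(0,+\infty)$ be the set of $\lambda>0$ for which $(\mathcal E_\lambda)$ admits a weak solution. Assume $\inf\Sigma_q=0$. Then for any choice of weak solutions $u_\lambda$ of $(\mathcal E_\lambda)$, $\lambda\in\Sigma_q$, one has $\|u_\lambda\|_{L^\infty(\Omega)}\to+\infty$ as $\lambda\to0$, $\lambda\in\Sigma_q$.
   Context: Standing setting: $\Omega\subset\mathbb R^d$, $d\ge2$, bounded regular domain; $s\in(0,1)$, $p\in(1,\infty)$; $\langle(-\Delta)^s_pu,\phi\rangle=\int_{\mathbb R^{2d}}\frac{|u(x)-u(y)|^{p-2}(u(x)-u(y))(\phi(x)-\phi(y))}{|x-y|^{d+sp}}$; $W^{s,p}_0(\Omega)$ = functions in $L^p(\mathbb R^d)$ vanishing a.e. off $\Omega$ with finite seminorm $\big(\int_{\mathbb R^{2d}}\frac{|u(x)-u(y)|^p}{|x-y|^{d+sp}}\big)^{1/p}$. Parameters $r>p-1$; $b\in L^\infty(\Omega)$, $b\ge0$, $b\not\equiv0$, $b^{-1}(\{0\})=\overline{\Omega_0}$ with $\Omega_0\subset\Omega$ a $C^{1,1}$ open set, $|\Omega_0|>0$. Problem $(\mathcal E_\lambda)$: $(-\Delta)^s_pu=\lambda u^q-bu^r$ in $\Omega$, $u=0$ off $\Omega$, $u>0$ in $\Omega$; a weak solution is a positive $u\in W^{s,p}_0(\Omega)$ with $\langle(-\Delta)^s_pu,\phi\rangle=\int_\Omega(\lambda u^q-bu^r)\phi$ for all $\phi\in W^{s,p}_0(\Omega)$.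 *)

theory Defs
  imports "HOL-Analysis.Analysis" "HOL-Probability.Essential_Supremum"
begin

text \<open>Open sets of class C^{1,1}: near every boundary point the set is, in suitable
  orthonormal coordinates (unit direction e), the strict epigraph of a C^{1,1} function
  of the d-1 variables orthogonal to e (g is evaluated on the orthogonal projection).\<close>
definition C11_open :: "'a::euclidean_space set \<Rightarrow> bool" where
  "C11_open U \<longleftrightarrow> open U \<and>
     (\<forall>z\<in>frontier U. \<exists>r>0. \<exists>e::'a. norm e = 1 \<and>
        (\<exists>(g::'a \<Rightarrow> real) (G::'a \<Rightarrow> 'a) (L::real).
           (\<forall>x. (g has_derivative (\<lambda>h. G x \<bullet> h)) (at x)) \<and>
           L-lipschitz_on UNIV G \<and>
           U \<inter> ball z r = {x \<in> ball z r. x \<bullet> e > g (x - (x \<bullet> e) *\<^sub>R e)}))"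

definition gagliardo :: "real \<Rightarrow> real \<Rightarrow> ('a::euclidean_space \<Rightarrow> real) \<Rightarrow> ennreal" where
  "gagliardo s p u =
     (\<integral>\<^sup>+ z. ennreal (\<bar>u (fst z) - u (snd z)\<bar> powr p
                 / norm (fst z - snd z) powr (real DIM('a) + s * p)) \<partial>(lebesgue \<Otimes>\<^sub>M lebesgue))"

definition W0 :: "real \<Rightarrow> real \<Rightarrow> 'a::euclidean_space set \<Rightarrow> ('a \<Rightarrow> real) set" where
  "W0 s p \<Omega> = {u. u \<in> borel_measurable lebesgue \<and>
                  integrable lebesgue (\<lambda>x. \<bar>u x\<bar> powr p) \<and>
                  (AE x in lebesgue. x \<notin> \<Omega> \<longrightarrow> u x = 0) \<and>
                  gagliardo s p u < \<infinity>}"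

definition frac_pLap :: "real \<Rightarrow> real \<Rightarrow> ('a::euclidean_space \<Rightarrow> real) \<Rightarrow> ('a \<Rightarrow> real) \<Rightarrow> real" where
  "frac_pLap s p u \<phi> =
     (\<integral> z. \<bar>u (fst z) - u (snd z)\<bar> powr (p - 2) * (u (fst z) - u (snd z))
            * (\<phi> (fst z) - \<phi> (snd z))
            / norm (fst z - snd z) powr (real DIM('a) + s * p) \<partial>(lebesgue \<Otimes>\<^sub>M lebesgue))"

definition weak_sol ::
  "real \<Rightarrow> real \<Rightarrow> real \<Rightarrow> real \<Rightarrow> ('a::euclidean_space \<Rightarrow> real) \<Rightarrow> 'a set \<Rightarrow> real \<Rightarrow> ('a \<Rightarrow> real) \<Rightarrow> bool" where
  "weak_sol s p q r b \<Omega> lam u \<longleftrightarrow>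
     u \<in> W0 s p \<Omega> \<and> (AE x in lebesgue. x \<in> \<Omega> \<longrightarrow> u x > 0) \<and>
     (\<forall>\<phi>\<in>W0 s p \<Omega>.
        set_integrable lebesgue \<Omega> (\<lambda>x. (lam * u x powr q - b x * u x powr r) * \<phi> x) \<and>
        frac_pLap s p u \<phi> = (LINT x:\<Omega>|lebesgue. (lam * u x powr q - b x * u x powr r) * \<phi> x))"

definition Sigma_q ::
  "real \<Rightarrow> real \<Rightarrow> real \<Rightarrow> real \<Rightarrow> ('a::euclidean_space \<Rightarrow> real) \<Rightarrow> 'a set \<Rightarrow> real set" where
  "Sigma_q s p q r b \<Omega> = {lam. lam > 0 \<and> (\<exists>u. weak_sol s p q r b \<Omega> lam u)}"

definition Linf_norm :: "'a::euclidean_space set \<Rightarrow> ('a \<Rightarrow> real) \<Rightarrow> ereal" where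
  "Linf_norm \<Omega> u = esssup lebesgue (\<lambda>x. ereal (indicator \<Omega> x * \<bar>u x\<bar>))"

end

theory Submission
  imports Defs
begin

text \<open>Testing the weak formulation with the solution \<open>u\<^sub>\<lambda>\<close> itself and using \<open>b \<ge> 0\<close> gives
  \<open>[u\<^sub>\<lambda>]\<^sup>p \<le> \<lambda> \<parallel>u\<^sub>\<lambda>\<parallel>\<^sub>\<infinity>\<^bsup>q+1-p\<^esup> \<integral>\<^sub>\<Omega> u\<^sub>\<lambda>\<^sup>p\<close>, while a (crude) fractional Poincare
  inequality gives \<open>c \<integral>\<^sub>\<Omega> u\<^sub>\<lambda>\<^sup>p \<le> [u\<^sub>\<lambda>]\<^sup>p\<close> with \<open>c > 0\<close> independent of \<open>\<lambda>\<close>. Since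
  \<open>\<integral>\<^sub>\<Omega> u\<^sub>\<lambda>\<^sup>p > 0\<close>, this yields \<open>\<parallel>u\<^sub>\<lambda>\<parallel>\<^sub>\<infinity>\<^bsup>q+1-p\<^esup> \<ge> c/\<lambda>\<close>, and \<open>q + 1 - p > 0\<close>.
  Besides \<open>q > p - 1\<close>, only openness and boundedness of \<open>\<Omega>\<close>, \<open>b \<ge> 0\<close> and \<open>|\<Omega>\<^sub>0| > 0\<close> are
  used.\<close>

lemma sigma_finite_lebesgue: "sigma_finite_measure (lebesgue :: 'a::euclidean_space measure)"
proof -
  obtain A where A: "countable A" "A \<subseteq> sets (lborel::'a measure)" "\<Union>A = space lborel"
      "\<forall>a\<in>A. emeasure lborel a \<noteq> \<infinity>"
    using sigma_finite_measure.sigma_finite_countable[OF sigma_finite_lborel] by blast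
  then show ?thesis
    by (intro sigma_finite_measure.intro exI[of _ A]) (auto simp: subset_eq)
qed

lemma gagliardo_kernel_measurable:
  fixes u :: "'a::euclidean_space \<Rightarrow> real"
  assumes "u \<in> borel_measurable lebesgue"
  shows "(\<lambda>z. \<bar>u (fst z) - u (snd z)\<bar> powr p / norm (fst z - snd z) powr (real DIM('a) + s * p))
      \<in> borel_measurable (lebesgue \<Otimes>\<^sub>M lebesgue)"
proof -
  have lebesgue_borel: "(\<lambda>x. x) \<in> (lebesgue::'a measure) \<rightarrow>\<^sub>M borel"
    by (intro measurable_completion) simp
  have "fst \<in> (lebesgue \<Otimes>\<^sub>M lebesgue) \<rightarrow>\<^sub>M (borel::'a measure)"
    "snd \<in> (lebesgue \<Otimes>\<^sub>M lebesgue) \<rightarrow>\<^sub>M (borel::'a measure)"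
    "(\<lambda>z. u (fst z)) \<in> borel_measurable (lebesgue \<Otimes>\<^sub>M lebesgue)"
    "(\<lambda>z. u (snd z)) \<in> borel_measurable (lebesgue \<Otimes>\<^sub>M lebesgue)"
    using measurable_compose[OF measurable_fst lebesgue_borel]
      measurable_compose[OF measurable_snd lebesgue_borel]
      measurable_compose[OF measurable_fst assms] measurable_compose[OF measurable_snd assms]
    by auto
  then show ?thesis by measurable
qed

lemma gagliardo_iterated:
  fixes u :: "'a::euclidean_space \<Rightarrow> real"
  assumes "u \<in> borel_measurable lebesgue"
  shows "gagliardo s p u = (\<integral>\<^sup>+x. \<integral>\<^sup>+y. ennreal (\<bar>u x - u y\<bar> powr p
            / norm (x - y) powr (real DIM('a) + s * p)) \<partial>lebesgue \<partial>lebesgue)"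
proof -
  interpret sigma_finite_measure "lebesgue :: 'a measure" by (rule sigma_finite_lebesgue)
  show ?thesis
    unfolding gagliardo_def
    using nn_integral_fst[of "\<lambda>z. ennreal (\<bar>u (fst z) - u (snd z)\<bar> powr p
            / norm (fst z - snd z) powr (real DIM('a) + s * p))" lebesgue]
      gagliardo_kernel_measurable[OF assms]
    by simp
qed

lemma bounded_far_unit_ball:
  fixes \<Omega> :: "'a::euclidean_space set"
  assumes "bounded \<Omega>"
  obtains D a where "D > 0" "\<And>x y. x \<in> \<Omega> \<Longrightarrow> y \<in> ball a 1 \<Longrightarrow> x \<noteq> y \<and> norm (x - y) \<le> D"
proof -
  obtain R where R: "R > 0" "\<Omega> \<subseteq> ball 0 R"
    using assms bounded_subset_ballD by blast
  obtain e :: 'a where e: "e \<in> Basis" by (meson ex_in_conv nonempty_Basis)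
  define a where "a = (2 * R + 1) *\<^sub>R e"
  have "norm a = 2 * R + 1" unfolding a_def using e R by simp
  have "x \<noteq> y \<and> norm (x - y) \<le> 3 * R + 2" if "x \<in> \<Omega>" "y \<in> ball a 1" for x y
  proof -
    have "norm x < R" using R that by auto
    moreover have "norm (a - y) < 1" using that by (simp add: dist_norm)
    then have "2 * R < norm y" "norm y < 2 * R + 2"
      using \<open>norm a = 2 * R + 1\<close> norm_triangle_ineq2[of a y] norm_triangle_ineq4[of a "a - y"] by auto
    moreover have "norm (x - y) \<le> norm x + norm y" by (rule norm_triangle_ineq4)
    ultimately show ?thesis using R(1) by auto
  qed
  with R show ?thesis by (intro that[of "3 * R + 2" a]) auto
qed

lemma nn_integral_kernel_ge_on_far_set:
  fixes u :: "'a::euclidean_space \<Rightarrow> real"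
  assumes "A \<in> sets lebesgue" "0 \<le> e" "D > 0"
    and far: "\<And>y. y \<in> A \<Longrightarrow> x \<noteq> y \<and> norm (x - y) \<le> D"
    and vanish: "AE y in lebesgue. y \<in> A \<longrightarrow> u y = 0"
  shows "ennreal (\<bar>u x\<bar> powr p / D powr e) * emeasure lebesgue A
      \<le> (\<integral>\<^sup>+y. ennreal (\<bar>u x - u y\<bar> powr p / norm (x - y) powr e) \<partial>lebesgue)"
proof -
  have "AE y in lebesgue. ennreal (\<bar>u x\<bar> powr p / D powr e) * indicator A y
      \<le> ennreal (\<bar>u x - u y\<bar> powr p / norm (x - y) powr e)"
    using vanish
  proof eventually_elim
    case (elim y)
    show ?case
    proof (cases "y \<in> A")
      case True
      with far elim have "u y = 0" "x \<noteq> y" "norm (x - y) \<le> D" by auto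
      then have "norm (x - y) powr e \<le> D powr e"
        using \<open>0 \<le> e\<close> by (intro powr_mono2) auto
      then have "\<bar>u x\<bar> powr p / D powr e \<le> \<bar>u x\<bar> powr p / norm (x - y) powr e"
        using \<open>x \<noteq> y\<close> \<open>D > 0\<close> by (intro divide_left_mono) auto
      with True \<open>u y = 0\<close> show ?thesis by (simp add: ennreal_leI)
    qed simp
  qed
  then have "(\<integral>\<^sup>+y. ennreal (\<bar>u x\<bar> powr p / D powr e) * indicator A y \<partial>lebesgue)
      \<le> (\<integral>\<^sup>+y. ennreal (\<bar>u x - u y\<bar> powr p / norm (x - y) powr e) \<partial>lebesgue)"
    by (rule nn_integral_mono_AE)
  with \<open>A \<in> sets lebesgue\<close> show ?thesis by (simp add: nn_integral_cmult_indicator)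
qed

text \<open>The \<open>y\<close>-integral is restricted to a unit ball away from \<open>\<Omega>\<close>, where \<open>u\<close> vanishes
  and the kernel is bounded below; this gives a (non-optimal) Poincare constant.\<close>

lemma fractional_Poincare:
  fixes \<Omega> :: "'a::euclidean_space set"
  assumes "bounded \<Omega>" "\<Omega> \<in> sets lebesgue" "0 \<le> s" "0 \<le> p"
  obtains c where "c > 0"
    "\<And>u. u \<in> borel_measurable lebesgue \<Longrightarrow> (AE x in lebesgue. x \<notin> \<Omega> \<longrightarrow> u x = 0) \<Longrightarrow>
       ennreal c * (\<integral>\<^sup>+x\<in>\<Omega>. ennreal (\<bar>u x\<bar> powr p) \<partial>lebesgue) \<le> gagliardo s p u"
proof -
  define ex where "ex = real DIM('a) + s * p"
  have "0 \<le> ex" unfolding ex_def using assms(3,4) by (intro add_nonneg_nonneg) auto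
  obtain D a where "D > 0" and far: "\<And>x y. x \<in> \<Omega> \<Longrightarrow> y \<in> ball a 1 \<Longrightarrow> x \<noteq> y \<and> norm (x - y) \<le> D"
    using bounded_far_unit_ball[OF assms(1)] by blast
  define A where "A = ball a (1::real)"
  define K where "K = D powr ex"
  have "K > 0" unfolding K_def using \<open>D > 0\<close> by simp
  have "measure lborel A > 0" unfolding A_def by (simp add: content_ball_pos)
  have mA: "emeasure lebesgue A = ennreal (measure lborel A)"
    unfolding A_def using emeasure_lborel_ball_finite[of a 1] by (simp add: emeasure_eq_ennreal_measure)
  define c where "c = measure lborel A / K"
  have "c > 0" unfolding c_def using \<open>K > 0\<close> \<open>measure lborel A > 0\<close> by simp
  moreover have "ennreal c * (\<integral>\<^sup>+x\<in>\<Omega>. ennreal (\<bar>u x\<bar> powr p) \<partial>lebesgue) \<le> gagliardo s p u"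
    if um: "u \<in> borel_measurable lebesgue" and u0: "AE x in lebesgue. x \<notin> \<Omega> \<longrightarrow> u x = 0" for u
  proof -
    define F where "F x y = ennreal (\<bar>u x - u y\<bar> powr p / norm (x - y) powr ex)" for x y
    have outside: "y \<notin> \<Omega>" if "y \<in> A" for y
      using far[of y y] that unfolding A_def by auto
    have vanish: "AE y in lebesgue. y \<in> A \<longrightarrow> u y = 0"
      using u0 by eventually_elim (auto dest: outside)
    have inner: "ennreal c * (ennreal (\<bar>u x\<bar> powr p) * indicator \<Omega> x) \<le> (\<integral>\<^sup>+y. F x y \<partial>lebesgue)" for x
    proof (cases "x \<in> \<Omega>")
      case True
      have "ennreal (\<bar>u x\<bar> powr p / K) * emeasure lebesgue A \<le> (\<integral>\<^sup>+y. F x y \<partial>lebesgue)"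
        unfolding F_def K_def using \<open>0 \<le> ex\<close> \<open>D > 0\<close> far[OF True] vanish
        by (intro nn_integral_kernel_ge_on_far_set) (auto simp: A_def)
      moreover have "ennreal (\<bar>u x\<bar> powr p / K) * emeasure lebesgue A
          = ennreal c * (ennreal (\<bar>u x\<bar> powr p) * indicator \<Omega> x)"
        using True \<open>K > 0\<close> unfolding mA c_def by (simp add: ennreal_mult'[symmetric] mult.commute)
      ultimately show ?thesis by simp
    qed simp
    have "ennreal c * (\<integral>\<^sup>+x\<in>\<Omega>. ennreal (\<bar>u x\<bar> powr p) \<partial>lebesgue)
        = (\<integral>\<^sup>+x. ennreal c * (ennreal (\<bar>u x\<bar> powr p) * indicator \<Omega> x) \<partial>lebesgue)"
    proof (rule nn_integral_cmult[symmetric])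
      show "(\<lambda>x. ennreal (\<bar>u x\<bar> powr p) * indicator \<Omega> x) \<in> borel_measurable lebesgue"
        using um assms(2) by measurable
    qed
    also have "\<dots> \<le> (\<integral>\<^sup>+x. \<integral>\<^sup>+y. F x y \<partial>lebesgue \<partial>lebesgue)"
      by (intro nn_integral_mono inner)
    also have "\<dots> = gagliardo s p u"
      unfolding gagliardo_iterated[OF um] F_def ex_def ..
    finally show ?thesis .
  qed
  ultimately show ?thesis by (rule that)
qed

text \<open>At \<open>t = 0\<close> both sides vanish because \<open>0 powr _ = 0\<close>, so no condition on \<open>p\<close> is needed.\<close>

lemma abs_powr_minus_two_mult_self: "\<bar>t\<bar> powr (p - 2) * t * t = \<bar>t\<bar> powr (p::real)"
proof (cases "t = 0")
  case False
  then have "\<bar>t\<bar> powr (p - 2) * t * t = \<bar>t\<bar> powr (p - 2) * \<bar>t\<bar> powr 2"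
    by (simp add: mult.assoc powr_numeral power2_eq_square)
  also have "\<dots> = \<bar>t\<bar> powr p"
    by (metis powr_add diff_add_cancel)
  finally show ?thesis .
qed simp

lemma frac_pLap_self_eq_gagliardo:
  fixes u :: "'a::euclidean_space \<Rightarrow> real"
  assumes "u \<in> borel_measurable lebesgue"
  shows "frac_pLap s p u u = enn2real (gagliardo s p u)"
proof -
  have "frac_pLap s p u u = (\<integral>z. \<bar>u (fst z) - u (snd z)\<bar> powr p
      / norm (fst z - snd z) powr (real DIM('a) + s * p) \<partial>(lebesgue \<Otimes>\<^sub>M lebesgue))"
    unfolding frac_pLap_def by (simp add: abs_powr_minus_two_mult_self)
  also have "\<dots> = enn2real (gagliardo s p u)"
    unfolding gagliardo_def using gagliardo_kernel_measurable[OF assms]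
    by (intro integral_eq_nn_integral) auto
  finally show ?thesis .
qed

lemma W0_set_integrable_powr:
  assumes "v \<in> W0 s p \<Omega>" "\<Omega> \<in> sets lebesgue"
  shows "set_integrable lebesgue \<Omega> (\<lambda>x. \<bar>v x\<bar> powr p)"
proof -
  have "integrable lebesgue (\<lambda>x. \<bar>v x\<bar> powr p)"
    using assms(1) unfolding W0_def by simp
  then show ?thesis
    unfolding set_integrable_def by (rule integrable_mult_indicator[OF assms(2)])
qed

lemma AE_le_if_Linf_norm_le:
  assumes "Linf_norm \<Omega> v \<le> ereal M"
  shows "AE x in lebesgue. x \<in> \<Omega> \<longrightarrow> \<bar>v x\<bar> \<le> M"
  using esssup_AE[of "\<lambda>x. ereal (indicator \<Omega> x * \<bar>v x\<bar>)" lebesgue]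
proof eventually_elim
  case (elim x)
  then have "ereal (indicator \<Omega> x * \<bar>v x\<bar>) \<le> ereal M"
    using assms unfolding Linf_norm_def by (rule order_trans)
  then show ?case by (cases "x \<in> \<Omega>") auto
qed

lemma set_integral_pos_AE:
  fixes f :: "'a \<Rightarrow> real"
  assumes f: "set_integrable M A f" and A: "A \<in> sets M"
    and pos: "AE x in M. x \<in> A \<longrightarrow> 0 < f x" and "emeasure M A > 0"
  shows "0 < (LINT x:A|M. f x)"
proof -
  have nonneg: "AE x in M. 0 \<le> indicator A x *\<^sub>R f x"
    using pos by eventually_elim (auto simp: indicator_def)
  have "(LINT x:A|M. f x) \<noteq> 0"
  proof
    assume "(LINT x:A|M. f x) = 0"
    then have "AE x in M. indicator A x *\<^sub>R f x = 0"
      using integral_nonneg_eq_0_iff_AE[OF f[unfolded set_integrable_def] nonneg]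
      unfolding set_lebesgue_integral_def by simp
    then have null: "AE x in M. x \<notin> A"
      using pos by eventually_elim (auto split: split_indicator)
    have "{x \<in> space M. \<not> x \<notin> A} = A"
      using sets.sets_into_space[OF A] by auto
    with null have "emeasure M A = 0"
      using AE_iff_measurable[OF A] by simp
    with \<open>emeasure M A > 0\<close> show False by simp
  qed
  moreover have "0 \<le> (LINT x:A|M. f x)"
    unfolding set_lebesgue_integral_def using nonneg by (rule integral_nonneg_AE)
  ultimately show ?thesis by simp
qed

lemma reaction_times_solution_le:
  fixes t M lam \<beta> :: real
  assumes "0 < t" "t \<le> M" "0 \<le> lam" "0 \<le> \<beta>" "p - 1 \<le> q"
  shows "(lam * t powr q - \<beta> * t powr r) * t \<le> lam * M powr (q + 1 - p) * t powr p"
proof -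
  have "t powr q * t = t powr (1 + q)"
    using powr_mult_base[of t q] assms(1) by (simp add: mult.commute)
  also have "\<dots> = t powr (q + 1 - p) * t powr p"
    by (simp add: algebra_simps flip: powr_add)
  finally have exponents: "t powr q * t = t powr (q + 1 - p) * t powr p" .
  have "(lam * t powr q - \<beta> * t powr r) * t \<le> lam * (t powr q * t)"
    using assms by (simp add: algebra_simps)
  also have "\<dots> \<le> lam * (M powr (q + 1 - p) * t powr p)"
    unfolding exponents using assms by (intro mult_left_mono mult_right_mono powr_mono2) auto
  finally show ?thesis by simp
qed

lemma weak_sol_energy_le:
  fixes \<Omega> :: "'a::euclidean_space set"
  assumes ws: "weak_sol s p q r b \<Omega> lam v" and "0 \<le> lam" and "Linf_norm \<Omega> v \<le> ereal M"
    and "\<forall>x\<in>\<Omega>. 0 \<le> b x" and "p - 1 \<le> q" and "\<Omega> \<in> sets lebesgue"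
  shows "frac_pLap s p v v \<le> lam * M powr (q + 1 - p) * (LINT x:\<Omega>|lebesgue. \<bar>v x\<bar> powr p)"
proof -
  have W: "v \<in> W0 s p \<Omega>" and vpos: "AE x in lebesgue. x \<in> \<Omega> \<longrightarrow> 0 < v x"
    and tested: "set_integrable lebesgue \<Omega> (\<lambda>x. (lam * v x powr q - b x * v x powr r) * v x)"
      "frac_pLap s p v v = (LINT x:\<Omega>|lebesgue. (lam * v x powr q - b x * v x powr r) * v x)"
    using ws unfolding weak_sol_def by auto
  have "set_integrable lebesgue \<Omega> (\<lambda>x. \<bar>v x\<bar> powr p)"
    using W \<open>\<Omega> \<in> sets lebesgue\<close> by (rule W0_set_integrable_powr)
  have "(LINT x:\<Omega>|lebesgue. (lam * v x powr q - b x * v x powr r) * v x)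
      \<le> (LINT x:\<Omega>|lebesgue. lam * M powr (q + 1 - p) * \<bar>v x\<bar> powr p)"
  proof (rule set_integral_mono_AE[OF tested(1)])
    show "set_integrable lebesgue \<Omega> (\<lambda>x. lam * M powr (q + 1 - p) * \<bar>v x\<bar> powr p)"
      using \<open>set_integrable lebesgue \<Omega> (\<lambda>x. \<bar>v x\<bar> powr p)\<close> by (rule set_integrable_mult_right)
    show "AE x\<in>\<Omega> in lebesgue.
        (lam * v x powr q - b x * v x powr r) * v x \<le> lam * M powr (q + 1 - p) * \<bar>v x\<bar> powr p"
      using vpos AE_le_if_Linf_norm_le[OF assms(3)]
    proof eventually_elim
      case (elim x)
      show ?case
      proof
        assume "x \<in> \<Omega>"
        with elim have "0 < v x" "v x \<le> M" by auto
        with reaction_times_solution_le[OF this assms(2) _ assms(5)] assms(4) \<open>x \<in> \<Omega>\<close>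
        show "(lam * v x powr q - b x * v x powr r) * v x \<le> lam * M powr (q + 1 - p) * \<bar>v x\<bar> powr p"
          by simp
      qed
    qed
  qed
  then show ?thesis using tested(2) by simp
qed

lemma weak_sol_Linf_norm_bound:
  fixes \<Omega> :: "'a::euclidean_space set"
  assumes ws: "weak_sol s p q r b \<Omega> lam v" and "0 \<le> lam" and "Linf_norm \<Omega> v \<le> ereal M"
    and "\<forall>x\<in>\<Omega>. 0 \<le> b x" and "p - 1 \<le> q"
    and "\<Omega> \<in> sets lebesgue" and "emeasure lebesgue \<Omega> > 0"
    and "0 \<le> c" and Poincare: "ennreal c * (\<integral>\<^sup>+x\<in>\<Omega>. ennreal (\<bar>v x\<bar> powr p) \<partial>lebesgue) \<le> gagliardo s p v"
  shows "c \<le> lam * M powr (q + 1 - p)"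
proof -
  define I where "I = (LINT x:\<Omega>|lebesgue. \<bar>v x\<bar> powr p)"
  have W: "v \<in> W0 s p \<Omega>" and vpos: "AE x in lebesgue. x \<in> \<Omega> \<longrightarrow> 0 < v x"
    using ws unfolding weak_sol_def by auto
  then have vm: "v \<in> borel_measurable lebesgue" and "gagliardo s p v < \<infinity>"
    unfolding W0_def by simp_all
  have int: "set_integrable lebesgue \<Omega> (\<lambda>x. \<bar>v x\<bar> powr p)"
    using W \<open>\<Omega> \<in> sets lebesgue\<close> by (rule W0_set_integrable_powr)
  have "AE x in lebesgue. x \<in> \<Omega> \<longrightarrow> 0 < \<bar>v x\<bar> powr p"
    using vpos by eventually_elim auto
  with int \<open>\<Omega> \<in> sets lebesgue\<close> \<open>emeasure lebesgue \<Omega> > 0\<close> have "0 < I"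
    unfolding I_def by (intro set_integral_pos_AE)
  have "(\<integral>\<^sup>+x\<in>\<Omega>. ennreal (\<bar>v x\<bar> powr p) \<partial>lebesgue) = ennreal I"
    unfolding I_def set_lebesgue_integral_def nn_integral_set_ennreal
    using int unfolding set_integrable_def
    by (subst nn_integral_eq_integral) (auto simp: mult.commute)
  moreover have "gagliardo s p v = ennreal (frac_pLap s p v v)"
    using frac_pLap_self_eq_gagliardo[OF vm] \<open>gagliardo s p v < \<infinity>\<close> by simp
  ultimately have "ennreal (c * I) \<le> ennreal (frac_pLap s p v v)"
    using Poincare \<open>0 \<le> c\<close> \<open>0 < I\<close> by (simp add: ennreal_mult)
  moreover have "0 \<le> frac_pLap s p v v"
    by (simp add: frac_pLap_self_eq_gagliardo[OF vm])
  ultimately have "c * I \<le> frac_pLap s p v v"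
    by (simp add: ennreal_le_iff)
  then have "c * I \<le> lam * M powr (q + 1 - p) * I"
    using weak_sol_energy_le[OF assms(1-6)] unfolding I_def by simp
  with \<open>0 < I\<close> show ?thesis by simp
qed

lemma tendsto_PInfty_at_0_if_lower_power_bound:
  fixes f :: "real \<Rightarrow> ereal"
  assumes "c > 0" and bound: "\<And>lam M. lam \<in> S \<Longrightarrow> f lam \<le> ereal M \<Longrightarrow> c \<le> lam * M powr k"
  shows "(f \<longlongrightarrow> \<infinity>) (at 0 within S)"
  unfolding tendsto_PInfty eventually_at
proof
  fix R :: real
  define M where "M = max R 1"
  have "0 < M powr k" unfolding M_def by simp
  show "\<exists>d>0. \<forall>lam\<in>S. lam \<noteq> 0 \<and> dist lam 0 < d \<longrightarrow> ereal R < f lam"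
  proof (intro exI[of _ "c / M powr k"] conjI ballI impI)
    show "0 < c / M powr k" using \<open>c > 0\<close> \<open>0 < M powr k\<close> by simp
    fix lam
    assume "lam \<in> S" "lam \<noteq> 0 \<and> dist lam 0 < c / M powr k"
    then have "\<bar>lam\<bar> * M powr k < c"
      using \<open>0 < M powr k\<close> by (simp add: dist_real_def pos_less_divide_eq)
    moreover have "lam * M powr k \<le> \<bar>lam\<bar> * M powr k"
      using \<open>0 < M powr k\<close> by (intro mult_right_mono) auto
    ultimately have "ereal M < f lam"
      using bound[OF \<open>lam \<in> S\<close>, of M] by (meson not_le order.strict_trans1)
    then show "ereal R < f lam"
      unfolding M_def by (simp add: le_less_trans)
  qed
qed

theorem theorem2p6:
  fixes \<Omega> \<Omega>0 :: "'a::euclidean_space set" and b :: "'a \<Rightarrow> real"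
    and s p q r :: real and u :: "real \<Rightarrow> 'a \<Rightarrow> real"
  assumes dim: "DIM('a) \<ge> 2"
    and dom: "open \<Omega>" "connected \<Omega>" "bounded \<Omega>" "C11_open \<Omega>"
    and sp: "0 < s" "s < 1" "1 < p"
    and r: "r > p - 1"
    and b_meas: "set_borel_measurable lebesgue \<Omega> b"
    and b_bdd: "\<exists>C. AE x in lebesgue. x \<in> \<Omega> \<longrightarrow> \<bar>b x\<bar> \<le> C"
    and b_nonneg: "\<forall>x\<in>\<Omega>. b x \<ge> 0"
    and b_nz: "\<not> (AE x in lebesgue. x \<in> \<Omega> \<longrightarrow> b x = 0)"
    and b_zero: "{x \<in> \<Omega>. b x = 0} = closure \<Omega>0"
    and Om0: "\<Omega>0 \<subseteq> \<Omega>" "C11_open \<Omega>0" "emeasure lebesgue \<Omega>0 > 0"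
    and q: "q > p - 1"
    and Sig_ne: "Sigma_q s p q r b \<Omega> \<noteq> {}"
    and Sig_inf: "Inf (Sigma_q s p q r b \<Omega>) = 0"
    and sols: "\<forall>lam\<in>Sigma_q s p q r b \<Omega>. weak_sol s p q r b \<Omega> lam (u lam)"
  shows "((\<lambda>lam. Linf_norm \<Omega> (u lam)) \<longlongrightarrow> \<infinity>) (at 0 within Sigma_q s p q r b \<Omega>)"
proof -
  have "\<Omega> \<in> sets lebesgue" using dom(1) by simp
  have "0 \<le> s" "0 \<le> p" using sp by simp_all
  obtain c where "c > 0" and Poincare:
    "\<And>v. v \<in> borel_measurable lebesgue \<Longrightarrow> (AE x in lebesgue. x \<notin> \<Omega> \<longrightarrow> v x = 0) \<Longrightarrow>
       ennreal c * (\<integral>\<^sup>+x\<in>\<Omega>. ennreal (\<bar>v x\<bar> powr p) \<partial>lebesgue) \<le> gagliardo s p v"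
    using fractional_Poincare[OF dom(3) \<open>\<Omega> \<in> sets lebesgue\<close> \<open>0 \<le> s\<close> \<open>0 \<le> p\<close>] by blast
  have "emeasure lebesgue \<Omega>0 \<le> emeasure lebesgue \<Omega>"
    using Om0(1) \<open>\<Omega> \<in> sets lebesgue\<close> by (intro emeasure_mono)
  with Om0(3) have "emeasure lebesgue \<Omega> > 0" by simp
  show ?thesis
  proof (rule tendsto_PInfty_at_0_if_lower_power_bound[where k = "q + 1 - p", OF \<open>c > 0\<close>])
    fix lam M
    assume lam: "lam \<in> Sigma_q s p q r b \<Omega>" and "Linf_norm \<Omega> (u lam) \<le> ereal M"
    have ws: "weak_sol s p q r b \<Omega> lam (u lam)" and "0 \<le> lam"
      using sols lam unfolding Sigma_q_def by auto
    then have "u lam \<in> W0 s p \<Omega>" by (simp add: weak_sol_def)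
    then have "ennreal c * (\<integral>\<^sup>+x\<in>\<Omega>. ennreal (\<bar>u lam x\<bar> powr p) \<partial>lebesgue) \<le> gagliardo s p (u lam)"
      by (intro Poincare) (simp_all add: W0_def)
    with ws \<open>0 \<le> lam\<close> \<open>Linf_norm \<Omega> (u lam) \<le> ereal M\<close> b_nonneg q \<open>\<Omega> \<in> sets lebesgue\<close>
      \<open>emeasure lebesgue \<Omega> > 0\<close> \<open>c > 0\<close>
    show "c \<le> lam * M powr (q + 1 - p)"
      by (intro weak_sol_Linf_norm_bound) auto
  qed
qed

end
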